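(* Let $\mathbb{X}\subseteq\mathbb{R}^n$, let $\mathbb{Y}$ be a finite set of classes, and let $D$ be a distribution on $\mathbb{X}\times\mathbb{Y}$ with joint density $p(\bm{x},k)$, marginal density $p(\bm{x})=\sum_k p(\bm{x},k)$ and posterior $p(\mathrm{y}=k\mid\mathbf{x}=\bm{x})=p(\bm{x},k)/p(\bm{x})$. Fix a distance $d$ on $\mathbb{X}$ and $\epsilon>0$, and for $\bm{x}\in\mathbb{X}$ let $\mathbb{V}_{\bm{x}}=\{\bm{x'}\in\mathbb{X}: d(\bm{x},\bm{x'})\le\epsilon\}$. For a classifier $h:\mathbb{X}\to\mathbb{Y}$ and $(\bm{x},y)\in\mathbb{X}\times\mathbb{Y}$, say $\operatorname{Rob}(h,\bm{x},y;\mathbb{V}_{\bm{x}})$ holds iff both (i) there is no $\bm{x'}\in\mathbb{X}$ with $d(\bm{x},\bm{x'})\le\epsilon$ and $h(\bm{x'})\neq y$, and (ii) there is no $(\bm{x'},y')\in\mathbb{X}\times\mathbb{Y}$ with $p(\bm{x'},y')>0$, $d(\bm{x},\bm{x'})\le\epsilon$ and $h(\bm{x'})\neq y'$. Define the irreducible robustness error $$\zeta^\sharp_D=\inf_{h\ \text{measurable}}\ \mathbb{E}_{(\mathbf{x},\mathrm{y})\sim D}\big[1-\mathbf{1}_{\operatorname{Rob}(h,\mathbf{x},\mathrm{y};\mathbb{V}_{\mathbf{x}})}\big].$$ Then $$\zeta^\sharp_D\ \ge\ \int\Big\lceil 1-\max_k p(\mathrm{y}=k\mid\mathbf{x}=\bm{x})\Big\rceil\,p(\bm{x})\,d\bm{x}\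 \ge\ \beta_D .$$
   Context: $\lceil\cdot\rceil$ is the ceiling function, so for $t\in[0,1]$, $\lceil t\rceil=1$ if $t>0$ and $0$ if $t=0$. The Bayes error of $D$ is $\beta_D=\int\big(1-\max_k p(\mathrm{y}=k\mid\mathbf{x}=\bm{x})\big)\,p(\bm{x})\,d\bm{x}$. *)

theory Defs
  imports "HOL-Analysis.Analysis"
begin

text \<open>Joint density p x k on X x Y (X a Lebesgue-measurable subset of R^n, Y a finite type).\<close>

definition marginal :: "('x \<Rightarrow> 'y::finite \<Rightarrow> real) \<Rightarrow> 'x \<Rightarrow> real" where
  "marginal p x = (\<Sum>k\<in>UNIV. p x k)"

definition posterior :: "('x \<Rightarrow> 'y::finite \<Rightarrow> real) \<Rightarrow> 'x \<Rightarrow> 'y \<Rightarrow> real" where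
  "posterior p x k = p x k / marginal p x"

definition Rob :: "'x set \<Rightarrow> ('x \<Rightarrow> 'y \<Rightarrow> real) \<Rightarrow> ('x \<Rightarrow> 'x \<Rightarrow> real) \<Rightarrow> real
    \<Rightarrow> ('x \<Rightarrow> 'y) \<Rightarrow> 'x \<Rightarrow> 'y \<Rightarrow> bool" where
  "Rob X p d \<epsilon> h x y \<longleftrightarrow>
     \<not> (\<exists>x'\<in>X. d x x' \<le> \<epsilon> \<and> h x' \<noteq> y) \<and>
     \<not> (\<exists>x'\<in>X. \<exists>y'. p x' y' > 0 \<and> d x x' \<le> \<epsilon> \<and> h x' \<noteq> y')"

text \<open>Expectation over D (density p w.r.t. Lebesgue x counting measure on X x Y)
  of a [0,inf]-valued function; nn_integral (lower integral).\<close>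
definition expect_D :: "(real^'n) set \<Rightarrow> (real^'n \<Rightarrow> 'y::finite \<Rightarrow> real)
    \<Rightarrow> (real^'n \<Rightarrow> 'y \<Rightarrow> ennreal) \<Rightarrow> ennreal" where
  "expect_D X p f = (\<integral>\<^sup>+ x\<in>X. (\<Sum>k\<in>UNIV. ennreal (p x k) * f x k) \<partial>lborel)"

definition irreducible_rob_error :: "(real^'n) set \<Rightarrow> (real^'n \<Rightarrow> 'y::finite \<Rightarrow> real)
    \<Rightarrow> (real^'n \<Rightarrow> real^'n \<Rightarrow> real) \<Rightarrow> real \<Rightarrow> ennreal" where
  "irreducible_rob_error X p d \<epsilon> =
     (INF h \<in> {h. h \<in> measurable (restrict_space borel X) (count_space UNIV)}.
        expect_D X p (\<lambda>x y. ennreal (1 - (if Rob X p d \<epsilon> h x y then 1 else 0))))"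

definition bayes_error :: "(real^'n) set \<Rightarrow> (real^'n \<Rightarrow> 'y::finite \<Rightarrow> real) \<Rightarrow> ennreal" where
  "bayes_error X p =
     (\<integral>\<^sup>+ x\<in>X. ennreal ((1 - Max (range (posterior p x))) * marginal p x) \<partial>lborel)"

end

theory Submission
  imports Defs
begin

text \<open>
  Both inequalities hold pointwise in \<open>x\<close>. If two distinct classes have positive density at
  \<open>x\<close>, every classifier disagrees with one of them at \<open>x\<close> itself, which lies in its own
  \<open>\<epsilon>\<close>-neighbourhood; so no label is robust at \<open>x\<close> and the robustness loss there is the whole
  marginal \<open>p(x) \<ge> \<lceil>1 - max\<^sub>k p(k|x)\<rceil> p(x)\<close>. Otherwise one class carries all the mass at
  \<open>x\<close>, its posterior is \<open>1\<close>, and \<open>\<lceil>1 - max\<^sub>k p(k|x)\<rceil> p(x) = 0\<close>. The Bayes error bound is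
  just \<open>t \<le> \<lceil>t\<rceil>\<close>.
\<close>

definition ambiguous :: "('x \<Rightarrow> 'y \<Rightarrow> real) \<Rightarrow> 'x \<Rightarrow> bool" where
  "ambiguous p x \<longleftrightarrow> (\<exists>k1 k2. k1 \<noteq> k2 \<and> p x k1 > 0 \<and> p x k2 > 0)"

lemma nn_set_integral_mono_pointwise:
  "(\<And>x. x \<in> A \<Longrightarrow> f x \<le> g x) \<Longrightarrow> (\<integral>\<^sup>+ x\<in>A. f x \<partial>M) \<le> (\<integral>\<^sup>+ x\<in>A. g x \<partial>M)"
  by (auto intro!: nn_integral_mono split: split_indicator)

lemma not_Rob_if_ambiguous:
  assumes "x \<in> X" "d x x \<le> \<epsilon>" "ambiguous p x"
  shows "\<not> Rob X p d \<epsilon> h x k"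
proof -
  obtain k1 k2 where "k1 \<noteq> k2" "p x k1 > 0" "p x k2 > 0"
    using \<open>ambiguous p x\<close> unfolding ambiguous_def by blast
  moreover have "h x \<noteq> k1 \<or> h x \<noteq> k2"
    using \<open>k1 \<noteq> k2\<close> by auto
  ultimately show ?thesis
    unfolding Rob_def using assms(1,2) by blast
qed

lemma marginal_nonneg:
  fixes p :: "'x \<Rightarrow> 'y::finite \<Rightarrow> real"
  assumes "\<And>k. p x k \<ge> 0"
  shows "marginal p x \<ge> 0"
  unfolding marginal_def using assms by (simp add: sum_nonneg)

lemma posterior_le_Max:
  fixes p :: "'x \<Rightarrow> 'y::finite \<Rightarrow> real"
  shows "posterior p x k \<le> Max (range (posterior p x))"
  by (rule Max_ge) auto

lemma ceiling_weight_le_marginal: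
  fixes p :: "'x \<Rightarrow> 'y::finite \<Rightarrow> real"
  assumes nonneg: "\<And>k. p x k \<ge> 0"
  shows "of_int \<lceil>1 - Max (range (posterior p x))\<rceil> * marginal p x \<le> marginal p x"
proof -
  fix k :: 'y
  have marginal: "marginal p x \<ge> 0"
    using nonneg by (rule marginal_nonneg)
  then have "posterior p x k \<ge> 0"
    unfolding posterior_def using nonneg by simp
  then have "Max (range (posterior p x)) \<ge> 0"
    using posterior_le_Max[of p x k] by linarith
  then have "of_int \<lceil>1 - Max (range (posterior p x))\<rceil> \<le> (1::real)"
    unfolding of_int_le_1_iff ceiling_le_one by linarith
  then have "of_int \<lceil>1 - Max (range (posterior p x))\<rceil> * marginal p x \<le> 1 * marginal p x"
    using marginal by (rule mult_right_mono)
  then show ?thesis by simp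
qed

lemma marginal_eq_if_single_class:
  fixes p :: "'x \<Rightarrow> 'y::finite \<Rightarrow> real"
  assumes "\<And>k. k \<noteq> k0 \<Longrightarrow> p x k = 0"
  shows "marginal p x = p x k0"
proof -
  have "marginal p x = p x k0 + (\<Sum>k\<in>UNIV - {k0}. p x k)"
    unfolding marginal_def by (simp add: sum.remove)
  also have "(\<Sum>k\<in>UNIV - {k0}. p x k) = 0"
    using assms by simp
  finally show ?thesis by simp
qed

lemma ceiling_weight_nonpos_if_unambiguous:
  fixes p :: "'x \<Rightarrow> 'y::finite \<Rightarrow> real"
  assumes nonneg: "\<And>k. p x k \<ge> 0" and "\<not> ambiguous p x"
  shows "of_int \<lceil>1 - Max (range (posterior p x))\<rceil> * marginal p x \<le> 0"
proof (cases "\<exists>k0. p x k0 > 0")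
  case False
  then have "marginal p x = 0"
    unfolding marginal_def using nonneg by (simp add: order.strict_iff_order)
  then show ?thesis by simp
next
  case True
  then obtain k0 where k0: "p x k0 > 0" by blast
  have "p x k = 0" if "k \<noteq> k0" for k
    using \<open>\<not> ambiguous p x\<close> k0 nonneg[of k] that
    unfolding ambiguous_def by (metis order.not_eq_order_implies_strict)
  then have marginal: "marginal p x = p x k0"
    by (rule marginal_eq_if_single_class)
  then have "posterior p x k0 = 1"
    unfolding posterior_def using k0 by simp
  then have "Max (range (posterior p x)) \<ge> 1"
    using posterior_le_Max[of p x k0] by simp
  then have "of_int \<lceil>1 - Max (range (posterior p x))\<rceil> \<le> (0::real)"
    unfolding of_int_le_0_iff ceiling_le_zero by linarith
  then show ?thesis
    using marginal k0 by (simp add: mult_nonpos_nonneg)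
qed

lemma ceiling_weight_le_rob_loss:
  fixes p :: "'x \<Rightarrow> 'y::finite \<Rightarrow> real"
  assumes nonneg: "\<And>k. p x k \<ge> 0"
    and not_robust: "ambiguous p x \<Longrightarrow> \<forall>k. \<not> R k"
  shows "ennreal (of_int \<lceil>1 - Max (range (posterior p x))\<rceil> * marginal p x)
         \<le> (\<Sum>k\<in>UNIV. ennreal (p x k) * ennreal (1 - (if R k then 1 else 0)))"
proof (cases "ambiguous p x")
  case True
  then have "(\<Sum>k\<in>UNIV. ennreal (p x k) * ennreal (1 - (if R k then 1 else 0)))
      = ennreal (marginal p x)"
    using not_robust nonneg unfolding marginal_def by simp
  then show ?thesis
    using ceiling_weight_le_marginal[of p x, OF nonneg] by (simp add: ennreal_leI)
next
  case False
  then show ?thesis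
    using ceiling_weight_nonpos_if_unambiguous[of p x, OF nonneg] by (simp add: ennreal_neg)
qed

lemma bayes_weight_le_ceiling_weight:
  fixes p :: "'x \<Rightarrow> 'y::finite \<Rightarrow> real"
  assumes "\<And>k. p x k \<ge> 0"
  shows "(1 - Max (range (posterior p x))) * marginal p x
       \<le> of_int \<lceil>1 - Max (range (posterior p x))\<rceil> * marginal p x"
  using marginal_nonneg[of p x, OF assms] by (intro mult_right_mono) auto

theorem theorem3:
  fixes X :: "(real^'n) set" and p :: "real^'n \<Rightarrow> 'y::finite \<Rightarrow> real"
    and d :: "real^'n \<Rightarrow> real^'n \<Rightarrow> real" and \<epsilon> :: real
  assumes X_meas: "X \<in> sets lborel"
    and p_nonneg: "\<And>x k. x \<in> X \<Longrightarrow> p x k \<ge> 0"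
    and p_meas: "\<And>k. (\<lambda>x. p x k) \<in> borel_measurable lborel"
    and p_total: "(\<integral>\<^sup>+ x\<in>X. ennreal (marginal p x) \<partial>lborel) = 1"
    and d_zero: "\<And>x x'. x \<in> X \<Longrightarrow> x' \<in> X \<Longrightarrow> d x x' = 0 \<longleftrightarrow> x = x'"
    and d_sym: "\<And>x x'. x \<in> X \<Longrightarrow> x' \<in> X \<Longrightarrow> d x x' = d x' x"
    and d_tri: "\<And>x x' x''. x \<in> X \<Longrightarrow> x' \<in> X \<Longrightarrow> x'' \<in> X \<Longrightarrow> d x x'' \<le> d x x' + d x' x''"
    and eps_pos: "\<epsilon> > 0"
  shows "irreducible_rob_error X p d \<epsilon>
           \<ge> (\<integral>\<^sup>+ x\<in>X. ennreal (of_int \<lceil>1 - Max (range (posterior p x))\<rceil> * marginal p x) \<partial>lborel)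
       \<and> (\<integral>\<^sup>+ x\<in>X. ennreal (of_int \<lceil>1 - Max (range (posterior p x))\<rceil> * marginal p x) \<partial>lborel)
           \<ge> bayes_error X p"
proof
  have "ennreal (of_int \<lceil>1 - Max (range (posterior p x))\<rceil> * marginal p x)
      \<le> (\<Sum>k\<in>UNIV. ennreal (p x k) * ennreal (1 - (if Rob X p d \<epsilon> h x k then 1 else 0)))"
    if "x \<in> X" for x h
  proof (rule ceiling_weight_le_rob_loss)
    show "\<And>k. p x k \<ge> 0" using p_nonneg \<open>x \<in> X\<close> by blast
    have "d x x \<le> \<epsilon>" using d_zero[OF \<open>x \<in> X\<close> \<open>x \<in> X\<close>] eps_pos by simp
    then show "ambiguous p x \<Longrightarrow> \<forall>k. \<not> Rob X p d \<epsilon> h x k"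
      using not_Rob_if_ambiguous[of x X d \<epsilon> p, OF \<open>x \<in> X\<close> \<open>d x x \<le> \<epsilon>\<close>] by blast
  qed
  then show "irreducible_rob_error X p d \<epsilon>
      \<ge> (\<integral>\<^sup>+ x\<in>X. ennreal (of_int \<lceil>1 - Max (range (posterior p x))\<rceil> * marginal p x) \<partial>lborel)"
    unfolding irreducible_rob_error_def expect_D_def
    by (intro INF_greatest nn_set_integral_mono_pointwise)
next
  show "bayes_error X p
      \<le> (\<integral>\<^sup>+ x\<in>X. ennreal (of_int \<lceil>1 - Max (range (posterior p x))\<rceil> * marginal p x) \<partial>lborel)"
    unfolding bayes_error_def
    by (intro nn_set_integral_mono_pointwise ennreal_leI bayes_weight_le_ceiling_weight)
      (simp add: p_nonneg)
qed

end
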